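(* Let $Q$ be a quiver such that every path of $Q$ belongs to $\mathcal{A}$, i.e. for any two vertices there is at most one path from one to the other. Then every two-sided algebra ideal $I$ of the path algebra $\Bbbk Q$ is a linearized semigroup ideal, i.e. $I$ is the linear span of a set $X$ of paths such that $\alpha\omega\beta\in X$ whenever $\omega\in X$, $\alpha,\beta$ are paths and the concatenation $\alpha\omega\beta$ is defined (non-zero).
   Context: $\Bbbk$ is an algebraically closed field. Paths include trivial paths $\varepsilon_x$ at vertices; the product of two paths in $\Bbbk Q$ is their concatenation when defined and $0$ otherwise; paths form a basis of $\Bbbk Q$. $\mathcal{A}$ is the set of paths $\omega$ such that no other path has the same head and the same tail as $\omega$. (Equivalently, in semigroup language: $I=\Bbbk\hat I/\Bbbk\mathbf{0}$ for a semigroup ideal $\hat I$ of the path semigroup with zero $\mathbf{0}$.) *)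

theory Defs
  imports "HOL-Computational_Algebra.Polynomial"
begin

definition alg_closed :: "'k::field itself \<Rightarrow> bool" where
  "alg_closed _ \<longleftrightarrow> (\<forall>p :: 'k poly. degree p > 0 \<longrightarrow> (\<exists>x. poly p x = 0))"

text \<open>A path is a pair (x, es): a start vertex x and a list of arrows es, traversed
  left to right. The trivial path at x is (x, []).\<close>

type_synonym ('v,'e) path = "'v \<times> 'e list"

definition is_path :: "('e \<Rightarrow> 'v) \<Rightarrow> ('e \<Rightarrow> 'v) \<Rightarrow> ('v,'e) path \<Rightarrow> bool" where
  "is_path src tgt p \<longleftrightarrow>
     (case p of (x, es) \<Rightarrow>
        (es \<noteq> [] \<longrightarrow> src (hd es) = x) \<and>
        (\<forall>i. Suc i < length es \<longrightarrow> tgt (es ! i) = src (es ! Suc i)))"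

definition ptail :: "('v,'e) path \<Rightarrow> 'v" where
  "ptail p = fst p"

definition phead :: "('e \<Rightarrow> 'v) \<Rightarrow> ('v,'e) path \<Rightarrow> 'v" where
  "phead tgt p = (if snd p = [] then fst p else tgt (last (snd p)))"

definition composable :: "('e \<Rightarrow> 'v) \<Rightarrow> ('v,'e) path \<Rightarrow> ('v,'e) path \<Rightarrow> bool" where
  "composable tgt p q \<longleftrightarrow> phead tgt p = ptail q"

definition pconcat :: "('v,'e) path \<Rightarrow> ('v,'e) path \<Rightarrow> ('v,'e) path" where
  "pconcat p q = (fst p, snd p @ snd q)"

definition pathsA :: "('e \<Rightarrow> 'v) \<Rightarrow> ('e \<Rightarrow> 'v) \<Rightarrow> ('v,'e) path set" where
  "pathsA src tgt = {w. is_path src tgt w \<and>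
      (\<forall>q. is_path src tgt q \<and> q \<noteq> w \<longrightarrow>
           \<not> (ptail q = ptail w \<and> phead tgt q = phead tgt w))}"

text \<open>Path algebra kQ: finitely supported coefficient functions on paths
  (paths form a basis); product extends concatenation bilinearly
  (product of paths is 0 when concatenation is undefined).\<close>
definition path_algebra :: "('e \<Rightarrow> 'v) \<Rightarrow> ('e \<Rightarrow> 'v) \<Rightarrow> (('v,'e) path \<Rightarrow> 'k::field) set" where
  "path_algebra src tgt = {f. finite {p. f p \<noteq> 0} \<and> (\<forall>p. f p \<noteq> 0 \<longrightarrow> is_path src tgt p)}"

definition pa_mult :: "('e \<Rightarrow> 'v) \<Rightarrow> (('v,'e) path \<Rightarrow> 'k::field) \<Rightarrow> (('v,'e) path \<Rightarrow> 'k) \<Rightarrow> (('v,'e) path \<Rightarrow> 'k)" where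
  "pa_mult tgt f g = (\<lambda>r. \<Sum>(p,q) \<in> {p. f p \<noteq> 0} \<times> {q. g q \<noteq> 0}.
      (if composable tgt p q \<and> pconcat p q = r then f p * g q else 0))"

definition pa_ideal :: "('e \<Rightarrow> 'v) \<Rightarrow> ('e \<Rightarrow> 'v) \<Rightarrow> (('v,'e) path \<Rightarrow> 'k::field) set \<Rightarrow> bool" where
  "pa_ideal src tgt I \<longleftrightarrow>
     I \<subseteq> path_algebra src tgt \<and> (\<lambda>_. 0) \<in> I \<and>
     (\<forall>f\<in>I. \<forall>g\<in>I. (\<lambda>r. f r + g r) \<in> I) \<and>
     (\<forall>c. \<forall>f\<in>I. (\<lambda>r. c * f r) \<in> I) \<and>
     (\<forall>a\<in>path_algebra src tgt. \<forall>f\<in>I. pa_mult tgt a f \<in> I \<and> pa_mult tgt f a \<in> I)"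

definition pbasis :: "('v,'e) path \<Rightarrow> (('v,'e) path \<Rightarrow> 'k::field)" where
  "pbasis p = (\<lambda>r. if r = p then 1 else 0)"

definition pspan :: "('v,'e) path set \<Rightarrow> (('v,'e) path \<Rightarrow> 'k::field) set" where
  "pspan X = {(\<lambda>r. \<Sum>p\<in>F. c p * pbasis p r) | F c. finite F \<and> F \<subseteq> X}"

definition path_semigroup_ideal :: "('e \<Rightarrow> 'v) \<Rightarrow> ('e \<Rightarrow> 'v) \<Rightarrow> ('v,'e) path set \<Rightarrow> bool" where
  "path_semigroup_ideal src tgt X \<longleftrightarrow>
     X \<subseteq> {p. is_path src tgt p} \<and>
     (\<forall>w\<in>X. \<forall>a b. is_path src tgt a \<and> is_path src tgt b \<and>
        composable tgt a w \<and> composable tgt w b \<longrightarrow> pconcat (pconcat a w) b \<in> X)"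

end

theory Submission
  imports Defs
begin

text \<open>Sandwiching an element f of kQ between the trivial paths at the tail and at the head of
  a path p keeps exactly the coefficients of the paths parallel to p. If p lies in \<A>, the
  only such path is p itself, so the sandwich is f p times p, and an ideal containing f
  contains p whenever f p \<noteq> 0. Hence, when all paths lie in \<A>, every ideal is spanned by
  the paths it contains, and these always form a semigroup ideal.\<close>

lemma support_pbasis: "{r. (pbasis p :: _ \<Rightarrow> 'k::field) r \<noteq> 0} = {p}"
  by (auto simp: pbasis_def)

lemma pbasis_in_path_algebra:
  "is_path src tgt p \<Longrightarrow> (pbasis p :: _ \<Rightarrow> 'k::field) \<in> path_algebra src tgt"
  by (auto simp: path_algebra_def pbasis_def)

lemma is_path_trivial: "is_path src tgt (x, [])"
  by (simp add: is_path_def)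

lemma composable_pconcat:
  "composable tgt (pconcat p q) r \<longleftrightarrow> composable tgt q r"
  if "composable tgt p q"
  using that by (auto simp: composable_def pconcat_def phead_def ptail_def)

lemma pa_mult_pbasis:
  "pa_mult tgt (pbasis p :: _ \<Rightarrow> 'k::field) (pbasis q) =
     (if composable tgt p q then pbasis (pconcat p q) else (\<lambda>_. 0))"
  unfolding pa_mult_def support_pbasis by (auto simp: pbasis_def fun_eq_iff)

lemma pa_mult_pbasis_left:
  "pa_mult tgt (pbasis p :: _ \<Rightarrow> 'k::field) f r =
     (\<Sum>q | f q \<noteq> 0. if composable tgt p q \<and> pconcat p q = r then f q else 0)"
  unfolding pa_mult_def support_pbasis
  by (auto simp: pbasis_def sum.cartesian_product[symmetric] intro!: sum.cong)

lemma pa_mult_pbasis_right: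
  "pa_mult tgt f (pbasis q :: _ \<Rightarrow> 'k::field) r =
     (\<Sum>p | f p \<noteq> 0. if composable tgt p q \<and> pconcat p q = r then f p else 0)"
  unfolding pa_mult_def support_pbasis
  by (auto simp: pbasis_def sum.cartesian_product[symmetric] intro!: sum.cong)

lemma pa_mult_trivial_left:
  assumes "finite {q. f q \<noteq> 0}"
  shows "pa_mult tgt (pbasis (x, []) :: _ \<Rightarrow> 'k::field) f =
           (\<lambda>r. if ptail r = x then f r else 0)"
proof
  fix r
  have "pa_mult tgt (pbasis (x, []) :: _ \<Rightarrow> 'k) f r =
          (\<Sum>q | f q \<noteq> 0. if q = r then (if ptail r = x then f r else 0) else 0)"
    unfolding pa_mult_pbasis_left
    by (rule sum.cong) (auto simp: composable_def phead_def ptail_def pconcat_def)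
  also have "\<dots> = (if ptail r = x then f r else 0)"
    using assms by (simp add: sum.delta')
  finally show "pa_mult tgt (pbasis (x, []) :: _ \<Rightarrow> 'k) f r = (if ptail r = x then f r else 0)" .
qed

lemma pa_mult_trivial_right:
  assumes "finite {p. f p \<noteq> 0}"
  shows "pa_mult tgt f (pbasis (y, []) :: _ \<Rightarrow> 'k::field) =
           (\<lambda>r. if phead tgt r = y then f r else 0)"
proof
  fix r
  have "pa_mult tgt f (pbasis (y, []) :: _ \<Rightarrow> 'k) r =
          (\<Sum>p | f p \<noteq> 0. if p = r then (if phead tgt r = y then f r else 0) else 0)"
    unfolding pa_mult_pbasis_right
    by (rule sum.cong) (auto simp: composable_def phead_def ptail_def pconcat_def)
  also have "\<dots> = (if phead tgt r = y then f r else 0)"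
    using assms by (simp add: sum.delta')
  finally show "pa_mult tgt f (pbasis (y, []) :: _ \<Rightarrow> 'k) r =
                  (if phead tgt r = y then f r else 0)" .
qed

lemma pa_mult_trivial_sandwich:
  assumes "finite {q. f q \<noteq> 0}"
  shows "pa_mult tgt (pa_mult tgt (pbasis (x, [])) f) (pbasis (y, []) :: _ \<Rightarrow> 'k::field) =
           (\<lambda>r. if ptail r = x \<and> phead tgt r = y then f r else 0)"
proof -
  have "finite {r. (if ptail r = x then f r else 0) \<noteq> 0}"
    by (rule finite_subset[OF _ assms]) auto
  then show ?thesis
    by (simp add: pa_mult_trivial_left[OF assms] pa_mult_trivial_right fun_eq_iff)
qed

lemma pa_mult_trivial_sandwich_pathsA:
  assumes "p \<in> pathsA src tgt" and "f \<in> path_algebra src tgt"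
  shows "pa_mult tgt (pa_mult tgt (pbasis (ptail p, [])) f) (pbasis (phead tgt p, [])) =
           (\<lambda>r. f p * (pbasis p r :: 'k::field))"
proof -
  have "f r = 0" if "ptail r = ptail p" "phead tgt r = phead tgt p" "r \<noteq> p" for r
  proof (rule ccontr)
    assume "f r \<noteq> 0"
    with assms(2) have "is_path src tgt r" unfolding path_algebra_def by blast
    with assms(1) that show False unfolding pathsA_def by blast
  qed
  moreover have "finite {q. f q \<noteq> 0}"
    using assms(2) by (simp add: path_algebra_def)
  ultimately show ?thesis
    unfolding pa_mult_trivial_sandwich[OF \<open>finite _\<close>]
    by (auto simp: pbasis_def fun_eq_iff ptail_def)
qed

lemma
  assumes "pa_ideal src tgt I"
  shows pa_ideal_subset: "I \<subseteq> path_algebra src tgt"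
    and pa_ideal_zero: "(\<lambda>_. 0) \<in> I"
    and pa_ideal_add: "f \<in> I \<Longrightarrow> g \<in> I \<Longrightarrow> (\<lambda>r. f r + g r) \<in> I"
    and pa_ideal_smult: "f \<in> I \<Longrightarrow> (\<lambda>r. c * f r) \<in> I"
    and pa_ideal_mult_left: "a \<in> path_algebra src tgt \<Longrightarrow> f \<in> I \<Longrightarrow> pa_mult tgt a f \<in> I"
    and pa_ideal_mult_right: "a \<in> path_algebra src tgt \<Longrightarrow> f \<in> I \<Longrightarrow> pa_mult tgt f a \<in> I"
  using assms unfolding pa_ideal_def by blast+

lemma pbasis_in_pa_ideal:
  assumes I: "pa_ideal src tgt I" and "f \<in> I" and "f p \<noteq> 0" and "p \<in> pathsA src tgt"
  shows "pbasis p \<in> I"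
proof -
  let ?g = "pa_mult tgt (pa_mult tgt (pbasis (ptail p, [])) f) (pbasis (phead tgt p, []))"
  have "?g \<in> I"
    by (intro pa_ideal_mult_left[OF I] pa_ideal_mult_right[OF I]
        pbasis_in_path_algebra is_path_trivial \<open>f \<in> I\<close>)
  then have "(\<lambda>r. inverse (f p) * ?g r) \<in> I"
    by (rule pa_ideal_smult[OF I])
  moreover have "?g = (\<lambda>r. f p * pbasis p r)"
    using pa_ideal_subset[OF I] \<open>f \<in> I\<close> \<open>p \<in> pathsA src tgt\<close>
    by (auto intro: pa_mult_trivial_sandwich_pathsA)
  ultimately show ?thesis
    using \<open>f p \<noteq> 0\<close> by (simp add: mult.assoc[symmetric])
qed

lemma path_semigroup_ideal_pbasis_in_pa_ideal:
  assumes I: "pa_ideal src tgt (I :: (_ \<Rightarrow> 'k::field) set)"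
  shows "path_semigroup_ideal src tgt {p. pbasis p \<in> I}"
  unfolding path_semigroup_ideal_def
proof (intro conjI ballI allI impI)
  show "{p. pbasis p \<in> I} \<subseteq> {p. is_path src tgt p}"
    using pa_ideal_subset[OF I] by (auto simp: path_algebra_def pbasis_def)
next
  fix w a b
  assume w: "w \<in> {p. pbasis p \<in> I}" and ab: "is_path src tgt a \<and> is_path src tgt b \<and>
    composable tgt a w \<and> composable tgt w b"
  have "pa_mult tgt (pa_mult tgt (pbasis a) (pbasis w)) (pbasis b) \<in> I"
    using w ab by (intro pa_ideal_mult_left[OF I] pa_ideal_mult_right[OF I]
        pbasis_in_path_algebra) auto
  with ab show "pconcat (pconcat a w) b \<in> {p. pbasis p \<in> I}"
    by (simp add: pa_mult_pbasis composable_pconcat)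
qed

lemma pspan_subset_pa_ideal:
  assumes I: "pa_ideal src tgt (I :: (_ \<Rightarrow> 'k::field) set)"
  shows "pspan {p. pbasis p \<in> I} \<subseteq> I"
proof -
  have "(\<lambda>r. \<Sum>p\<in>F. c p * pbasis p r) \<in> I" if "finite F" "F \<subseteq> {p. pbasis p \<in> I}" for F c
    using that
  proof (induction F rule: finite_induct)
    case empty
    show ?case using pa_ideal_zero[OF I] by simp
  next
    case (insert a F)
    then have "(\<lambda>r. c a * pbasis a r + (\<Sum>p\<in>F. c p * pbasis p r)) \<in> I"
      by (intro pa_ideal_add[OF I] pa_ideal_smult[OF I]) auto
    with insert show ?case by simp
  qed
  then show ?thesis
    unfolding pspan_def by blast
qed

lemma in_pspan_of_support_subset:
  assumes "finite {p. f p \<noteq> 0}" and "{p. f p \<noteq> 0} \<subseteq> X"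
  shows "(f :: _ \<Rightarrow> 'k::field) \<in> pspan X"
proof -
  have "f r = (\<Sum>p | f p \<noteq> 0. f p * pbasis p r)" for r
  proof -
    have "(\<Sum>p | f p \<noteq> 0. f p * pbasis p r) = (\<Sum>p | f p \<noteq> 0. if r = p then f r else 0)"
      by (rule sum.cong) (auto simp: pbasis_def)
    with assms(1) show ?thesis by (simp add: sum.delta)
  qed
  then have "f = (\<lambda>r. \<Sum>p | f p \<noteq> 0. f p * pbasis p r)" ..
  with assms show ?thesis
    unfolding pspan_def by blast
qed

theorem proposition2:
  fixes src tgt :: "'e \<Rightarrow> 'v"
    and I :: "(('v,'e) path \<Rightarrow> 'k::field) set"
  assumes "alg_closed TYPE('k)"
    and "\<forall>p. is_path src tgt p \<longrightarrow> p \<in> pathsA src tgt"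
    and "pa_ideal src tgt I"
  shows "\<exists>X. path_semigroup_ideal src tgt X \<and> I = pspan X"
proof (intro exI conjI)
  let ?X = "{p. pbasis p \<in> I}"
  show "path_semigroup_ideal src tgt ?X"
    using assms(3) by (rule path_semigroup_ideal_pbasis_in_pa_ideal)
  have "f \<in> pspan ?X" if "f \<in> I" for f
  proof (rule in_pspan_of_support_subset)
    have f: "f \<in> path_algebra src tgt"
      using pa_ideal_subset[OF assms(3)] \<open>f \<in> I\<close> ..
    then show "finite {p. f p \<noteq> 0}"
      by (simp add: path_algebra_def)
    show "{p. f p \<noteq> 0} \<subseteq> ?X"
      using f assms(2) pbasis_in_pa_ideal[OF assms(3) \<open>f \<in> I\<close>]
      by (auto simp: path_algebra_def)
  qed
  then show "I = pspan ?X"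
    using pspan_subset_pa_ideal[OF assms(3)] by blast
qed

end
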